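(* Consider the errorless symmetric relay network described in the context, with a fixed time horizon $T\ge 1$. A policy $\pi^*$ is optimal, i.e. it minimizes $\frac{1}{TK}\sum_{t=1}^T\sum_{k=1}^K h_k^{\pi}(t)$ over all policies $\pi$, if and only if $\pi^*$ satisfies both \[ \sum_{t=1}^{T}\sum_{\tau=1}^{t-2} R(\mathcal{S}^{\pi^*}(\tau)) = \max_{\pi}\sum_{t=1}^{T}\sum_{\tau=1}^{t-2} R(\mathcal{S}^{\pi}(\tau)) \] and \[ \sum_{\tau=1}^{t-1} R(\mathcal{S}^{\pi^*}(\tau)) = \sum_{\tau=1}^{t} R(\mathcal{U}^{\pi^*}(\tau)) \quad\text{for all time slots } t . \]
   Context: Fix integers $K\ge 2$ and $S,U$ with $1\le S<K$, $1\le U<K$, and $S=U$. There are $K$ processes indexed by $k\in\{1,\dots,K\}$ (sensor $k$ feeds destination $k$ through a single relay), and time slots $t=1,2,\dots$. The state at time $t$ consists of the relay AoI values $g_k(t)$ and the destination AoI values $h_k(t)$, with initial values $g_k(1)=h_k(1)=1$ for all $k$. A policy $\pi$ is a map assigning to the current state $(\{g_k(t)\}_k,\{h_k(t)\}_k)$ a pair $(\mathcal{S}^{\pi}(t),\mathcal{U}^{\pi}(t))$ of subsets of $\{1,\dots,K\}$ with $|\mathcal{S}^{\pi}(t)|=S$ (sensors sampled) and $|\mathcal{U}^{\pi}(t)|=U$ (destinations updated). Errorless dynamics: $g_k(t+1)=1$ if $k\in\mathcal{S}(t)$ and $g_k(t+1)=g_k(t)+1$ otherwise; $h_k(t+1)=g_k(t)+1$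 if $k\in\mathcal{U}(t)$ and $h_k(t+1)=h_k(t)+1$ otherwise. Write $g_k^\pi(t),h_k^\pi(t)$ for the resulting sequences under $\pi$. Define the reductions $R(\mathcal{S}^{\pi}(\tau))=\sum_{k\in\mathcal{S}^{\pi}(\tau)} g_k^{\pi}(\tau)$ and $R(\mathcal{U}^{\pi}(\tau))=\sum_{k\in\mathcal{U}^{\pi}(\tau)}\big(h_k^{\pi}(\tau)-g_k^{\pi}(\tau)\big)$; empty sums are $0$. *)

theory Defs
  imports Complex_Main
begin

text \<open>Processes are indexed by naturals; only indices in the range 1..K matter.
  A state is a pair (g, h) of relay AoI and destination AoI vectors.
  A policy maps the current state to the pair (sampled set, updated set).\<close>

type_synonym aoi_state = "(nat \<Rightarrow> nat) \<times> (nat \<Rightarrow> nat)"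
type_synonym policy = "(nat \<Rightarrow> nat) \<Rightarrow> (nat \<Rightarrow> nat) \<Rightarrow> nat set \<times> nat set"

definition valid_policy :: "nat \<Rightarrow> nat \<Rightarrow> nat \<Rightarrow> policy \<Rightarrow> bool" where
  "valid_policy K S U \<pi> \<longleftrightarrow>
     (\<forall>g h. fst (\<pi> g h) \<subseteq> {1..K} \<and> card (fst (\<pi> g h)) = S \<and>
            snd (\<pi> g h) \<subseteq> {1..K} \<and> card (snd (\<pi> g h)) = U)"

text \<open>Errorless dynamics; st pi n is the state at time slot n+1.\<close>
fun st :: "policy \<Rightarrow> nat \<Rightarrow> aoi_state" where
  "st \<pi> 0 = (\<lambda>_. 1, \<lambda>_. 1)"
| "st \<pi> (Suc n) =
     (let g = fst (st \<pi> n); h = snd (st \<pi> n);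
          Ss = fst (\<pi> g h); Us = snd (\<pi> g h)
      in (\<lambda>k. if k \<in> Ss then 1 else g k + 1,
          \<lambda>k. if k \<in> Us then g k + 1 else h k + 1))"

definition gA :: "policy \<Rightarrow> nat \<Rightarrow> nat \<Rightarrow> nat" where
  "gA \<pi> t = fst (st \<pi> (t - 1))"

definition hA :: "policy \<Rightarrow> nat \<Rightarrow> nat \<Rightarrow> nat" where
  "hA \<pi> t = snd (st \<pi> (t - 1))"

definition sampled :: "policy \<Rightarrow> nat \<Rightarrow> nat set" where
  "sampled \<pi> t = fst (\<pi> (gA \<pi> t) (hA \<pi> t))"

definition updated :: "policy \<Rightarrow> nat \<Rightarrow> nat set" where
  "updated \<pi> t = snd (\<pi> (gA \<pi> t) (hA \<pi> t))"

definition RS :: "policy \<Rightarrow> nat \<Rightarrow> int" where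
  "RS \<pi> \<tau> = (\<Sum>k\<in>sampled \<pi> \<tau>. int (gA \<pi> \<tau> k))"

definition RU :: "policy \<Rightarrow> nat \<Rightarrow> int" where
  "RU \<pi> \<tau> = (\<Sum>k\<in>updated \<pi> \<tau>. int (hA \<pi> \<tau> k) - int (gA \<pi> \<tau> k))"

definition avg_aoi :: "nat \<Rightarrow> nat \<Rightarrow> policy \<Rightarrow> real" where
  "avg_aoi K T \<pi> = (1 / (real T * real K)) * (\<Sum>t=1..T. \<Sum>k=1..K. real (hA \<pi> t k))"

definition cum_RS :: "nat \<Rightarrow> policy \<Rightarrow> int" where
  "cum_RS T \<pi> = (\<Sum>t=1..T. \<Sum>\<tau>=1..t - 2. RS \<pi> \<tau>)"

end

theory Submission
  imports Defs
begin

text \<open>Every slot adds 1 to each age, so \<open>\<Sum>k. g_k(t+1) = K(t+1) - \<Sum>\<tau>\<le>t. R(S(\<tau>))\<close> and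
  \<open>\<Sum>k. h_k(t+1) = K(t+1) - \<Sum>\<tau>\<le>t. R(U(\<tau>))\<close>: minimising the average AoI means maximising
  the accumulated update reductions. An update can reduce at most the current relay-destination gap
  \<open>\<Sum>k. h_k - g_k\<close>, which is the difference of the accumulated sampling and update reductions;
  hence \<open>\<Sum>\<tau>\<le>t. R(U(\<tau>)) \<le> \<Sum>\<tau>\<le>t-1. R(S(\<tau>))\<close> and the objective is bounded by cum_RS.
  Because S = U, the policy that samples the S oldest relay packets and forwards the S packets
  sampled in the previous slot meets this bound with equality, and it maximises cum_RS because its
  relay ages are dominated, level by level, by those of any other policy. So the optimal value is
  the maximum of cum_RS, and a policy is optimal iff it maximises cum_RS and is tight at every slot.\<close>

section \<open>Preliminaries on orders and finite sets\<close>

lemma max_iff_max_bound_tight: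
  fixes F G :: "'a \<Rightarrow> 'b::order"
  assumes "\<And>p. p \<in> P \<Longrightarrow> F p \<le> G p"
    and "q \<in> P" "F q = G q" "\<And>p. p \<in> P \<Longrightarrow> G p \<le> G q"
    and "x \<in> P"
  shows "(\<forall>p\<in>P. F p \<le> F x) \<longleftrightarrow> (\<forall>p\<in>P. G p \<le> G x) \<and> F x = G x"
proof
  assume "\<forall>p\<in>P. F p \<le> F x"
  then have "G q \<le> G x" "G x \<le> F x"
    using assms order_trans by metis+
  then show "(\<forall>p\<in>P. G p \<le> G x) \<and> F x = G x"
    using assms order_trans antisym by metis
next
  assume "(\<forall>p\<in>P. G p \<le> G x) \<and> F x = G x"
  then show "\<forall>p\<in>P. F p \<le> F x"
    using assms(1) order_trans by metis
qed

lemma top_subset_exists: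
  fixes g :: "'a \<Rightarrow> 'b::linorder"
  assumes "finite I" "S \<le> card I"
  shows "\<exists>A\<subseteq>I. card A = S \<and> (\<forall>i\<in>A. \<forall>j\<in>I - A. g j \<le> g i)"
  using assms(2)
proof (induction S)
  case 0
  then show ?case by auto
next
  case (Suc S)
  obtain A where A: "A \<subseteq> I" "card A = S" "\<forall>i\<in>A. \<forall>j\<in>I - A. g j \<le> g i"
    using Suc.IH[OF Suc_leD[OF Suc.prems]] by blast
  have fin: "finite (I - A)"
    using assms(1) by simp
  have ne: "I - A \<noteq> {}"
  proof
    assume "I - A = {}"
    then have "I = A"
      using A(1) by blast
    then show False
      using A(2) Suc.prems by simp
  qed
  have "Max (g ` (I - A)) \<in> g ` (I - A)"
    using fin ne by simp
  then obtain m where m: "m \<in> I - A" "g m = Max (g ` (I - A))"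
    by (metis imageE)
  have m_max: "g j \<le> g m" if "j \<in> I - A" for j
    using Max_ge[OF finite_imageI[OF fin] imageI[OF that]] m(2) by simp
  have "insert m A \<subseteq> I"
    using A(1) m(1) by blast
  moreover have "card (insert m A) = Suc S"
    using m(1) A(2) finite_subset[OF A(1) assms(1)] by simp
  moreover have "\<forall>i\<in>insert m A. \<forall>j\<in>I - insert m A. g j \<le> g i"
    using A(3) m_max by (metis Diff_iff insert_iff)
  ultimately show ?case
    by blast
qed

lemma card_superlevel_Diff_top_subset:
  fixes g :: "'a \<Rightarrow> 'b::linorder"
  assumes "finite I" "A \<subseteq> I" "\<forall>i\<in>A. \<forall>j\<in>I - A. g j \<le> g i"
  shows "card {k\<in>I - A. x \<le> g k} = card {k\<in>I. x \<le> g k} - card A"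
proof -
  let ?X = "{k\<in>I. x \<le> g k}"
  have "A \<subseteq> ?X \<or> ?X \<subseteq> A"
  proof (rule disjCI)
    assume "\<not> ?X \<subseteq> A"
    then obtain j where "j \<in> I - A" "x \<le> g j"
      by blast
    then have "x \<le> g i" if "i \<in> A" for i
      using assms(3) that by (meson order_trans)
    then show "A \<subseteq> ?X"
      using assms(2) by blast
  qed
  moreover have "{k\<in>I - A. x \<le> g k} = ?X - A"
    by auto
  moreover have "finite A" "finite ?X"
    using assms(1,2) finite_subset by auto
  ultimately show ?thesis
    by (metis Diff_eq_empty_iff card.empty card_Diff_subset card_mono diff_is_0_eq)
qed

lemma card_superlevel_Diff_ge:
  assumes "finite I" "A \<subseteq> I"
  shows "card {k\<in>I. x \<le> g k} - card A \<le> card {k\<in>I - A. x \<le> g k}"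
proof -
  have "card {k\<in>I. x \<le> g k} \<le> card ({k\<in>I - A. x \<le> g k} \<union> A)"
    using assms finite_subset by (intro card_mono) auto
  also have "\<dots> \<le> card {k\<in>I - A. x \<le> g k} + card A"
    by (rule card_Un_le)
  finally show ?thesis
    by simp
qed

lemma sum_eq_sum_card_superlevel:
  fixes g :: "'a \<Rightarrow> nat"
  assumes "finite I" "\<forall>k\<in>I. g k \<le> M"
  shows "(\<Sum>k\<in>I. g k) = (\<Sum>m=1..M. card {k\<in>I. m \<le> g k})"
proof -
  have "(\<Sum>m=1..M. card {k\<in>I. m \<le> g k}) = (\<Sum>m=1..M. \<Sum>k\<in>I. if m \<le> g k then 1 else 0)"
    using assms(1) by (simp add: sum.If_cases Int_def)
  also have "\<dots> = (\<Sum>k\<in>I. \<Sum>m=1..M. if m \<le> g k then 1 else 0)"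
    by (rule sum.swap)
  also have "\<dots> = (\<Sum>k\<in>I. card {1..g k})"
  proof (intro sum.cong refl)
    fix k assume "k \<in> I"
    then have "{1..M} \<inter> {m. m \<le> g k} = {1..g k}"
      using assms(2) by auto
    then show "(\<Sum>m=1..M. if m \<le> g k then 1 else 0) = card {1..g k}"
      by (simp add: sum.If_cases)
  qed
  finally show ?thesis
    by simp
qed

section \<open>Age accounting\<close>

lemma gA_Suc: "gA p (Suc n) = fst (st p n)"
  by (simp add: gA_def)

lemma hA_Suc: "hA p (Suc n) = snd (st p n)"
  by (simp add: hA_def)

lemma sampled_Suc: "sampled p (Suc n) = fst (p (fst (st p n)) (snd (st p n)))"
  by (simp add: sampled_def gA_Suc hA_Suc)

lemma updated_Suc: "updated p (Suc n) = snd (p (fst (st p n)) (snd (st p n)))"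
  by (simp add: updated_def gA_Suc hA_Suc)

lemma fst_st_Suc:
  "fst (st p (Suc n)) = (\<lambda>k. if k \<in> sampled p (Suc n) then 1 else fst (st p n) k + 1)"
  by (simp add: Let_def sampled_Suc)

lemma snd_st_Suc:
  "snd (st p (Suc n)) =
     (\<lambda>k. if k \<in> updated p (Suc n) then fst (st p n) k + 1 else snd (st p n) k + 1)"
  by (simp add: Let_def updated_Suc)

declare st.simps(2) [simp del]

lemma relay_age_pos: "1 \<le> fst (st p n) k"
  by (induction n) (auto simp: fst_st_Suc)

lemma relay_age_le: "fst (st p n) k \<le> Suc n"
  by (induction n) (auto simp: fst_st_Suc)

lemma relay_age_le_dest_age: "fst (st p n) k \<le> snd (st p n) k"
  by (induction n) (auto simp: fst_st_Suc snd_st_Suc)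

lemma sampled_subset: "valid_policy K S U p \<Longrightarrow> sampled p t \<subseteq> {1..K}"
  unfolding sampled_def valid_policy_def by blast

lemma card_sampled: "valid_policy K S U p \<Longrightarrow> card (sampled p t) = S"
  unfolding sampled_def valid_policy_def by blast

lemma updated_subset: "valid_policy K S U p \<Longrightarrow> updated p t \<subseteq> {1..K}"
  unfolding updated_def valid_policy_def by blast

lemma fresh_eq_sampled:
  assumes "valid_policy K S U p"
  shows "{k\<in>{1..K}. fst (st p (Suc n)) k = 1} = sampled p (Suc n)"
proof -
  have nonzero: "fst (st p n) k \<noteq> 0" for k
    using relay_age_pos[of p n k] by simp
  show ?thesis
    using sampled_subset[OF assms, of "Suc n"] by (auto simp: fst_st_Suc nonzero)
qed

lemma sum_if_mem_subset:
  fixes f c :: "'a \<Rightarrow> 'b::ab_group_add"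
  assumes "finite I" "A \<subseteq> I"
  shows "(\<Sum>k\<in>I. if k \<in> A then c k else f k) = (\<Sum>k\<in>I. f k) - (\<Sum>k\<in>A. f k) + (\<Sum>k\<in>A. c k)"
  using sum.subset_diff[OF assms(2,1), of "\<lambda>k. if k \<in> A then c k else f k"]
    sum.subset_diff[OF assms(2,1), of f] assms
  by (simp add: finite_subset)

lemma sum_relay_age_Suc:
  assumes "valid_policy K S U p"
  shows "(\<Sum>k=1..K. int (fst (st p (Suc n)) k)) =
           (\<Sum>k=1..K. int (fst (st p n) k)) + int K - RS p (Suc n)"
proof -
  let ?g = "fst (st p n)" and ?A = "sampled p (Suc n)"
  have "(\<Sum>k=1..K. int (fst (st p (Suc n)) k)) = (\<Sum>k=1..K. if k \<in> ?A then 1 else int (?g k) + 1)"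
    by (intro sum.cong) (simp_all add: fst_st_Suc)
  also have "\<dots> = (\<Sum>k=1..K. int (?g k) + 1) - (\<Sum>k\<in>?A. int (?g k) + 1) + (\<Sum>k\<in>?A. 1)"
    by (rule sum_if_mem_subset[OF finite_atLeastAtMost sampled_subset[OF assms]])
  finally show ?thesis
    by (simp add: sum.distrib RS_def gA_Suc)
qed

lemma sum_dest_age_Suc:
  assumes "valid_policy K S U p"
  shows "(\<Sum>k=1..K. int (snd (st p (Suc n)) k)) =
           (\<Sum>k=1..K. int (snd (st p n) k)) + int K - RU p (Suc n)"
proof -
  let ?g = "fst (st p n)" and ?h = "snd (st p n)" and ?A = "updated p (Suc n)"
  have "(\<Sum>k=1..K. int (snd (st p (Suc n)) k)) =
          (\<Sum>k=1..K. if k \<in> ?A then int (?g k) + 1 else int (?h k) + 1)"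
    by (intro sum.cong) (simp_all add: snd_st_Suc)
  also have "\<dots> = (\<Sum>k=1..K. int (?h k) + 1) - (\<Sum>k\<in>?A. int (?h k) + 1) + (\<Sum>k\<in>?A. int (?g k) + 1)"
    by (rule sum_if_mem_subset[OF finite_atLeastAtMost updated_subset[OF assms]])
  finally show ?thesis
    by (simp add: sum.distrib sum_subtractf RU_def gA_Suc hA_Suc)
qed

lemma sum_relay_age:
  assumes "valid_policy K S U p"
  shows "(\<Sum>k=1..K. int (fst (st p n) k)) = int K * int (Suc n) - (\<Sum>\<tau>=1..n. RS p \<tau>)"
proof (induction n)
  case (Suc n)
  show ?case
    unfolding sum_relay_age_Suc[OF assms] Suc by (simp add: algebra_simps)
qed simp

lemma sum_dest_age:
  assumes "valid_policy K S U p"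
  shows "(\<Sum>k=1..K. int (snd (st p n) k)) = int K * int (Suc n) - (\<Sum>\<tau>=1..n. RU p \<tau>)"
proof (induction n)
  case (Suc n)
  show ?case
    unfolding sum_dest_age_Suc[OF assms] Suc by (simp add: algebra_simps)
qed simp

lemma sum_age_gap:
  assumes "valid_policy K S U p"
  shows "(\<Sum>k=1..K. int (snd (st p n) k) - int (fst (st p n) k)) =
           (\<Sum>\<tau>=1..n. RS p \<tau>) - (\<Sum>\<tau>=1..n. RU p \<tau>)"
  unfolding sum_subtractf sum_relay_age[OF assms] sum_dest_age[OF assms] by simp

lemma RU_Suc_le_sum_age_gap:
  assumes "valid_policy K S U p"
  shows "RU p (Suc n) \<le> (\<Sum>k=1..K. int (snd (st p n) k) - int (fst (st p n) k))"
  unfolding RU_def gA_Suc hA_Suc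
  using updated_subset[OF assms] by (intro sum_mono2) (auto simp: relay_age_le_dest_age)

lemma sum_RU_le_sum_RS:
  assumes "valid_policy K S U p"
  shows "(\<Sum>\<tau>=1..t. RU p \<tau>) \<le> (\<Sum>\<tau>=1..t - 1. RS p \<tau>)"
proof (cases t)
  case (Suc n)
  then show ?thesis
    using RU_Suc_le_sum_age_gap[OF assms, of n] sum_age_gap[OF assms, of n] by simp
qed simp

text \<open>The paper's \<open>\<Sum>t=1..T. \<Sum>\<tau>=1..t-1. R(U(\<tau>))\<close>, reindexed from 0.\<close>
definition cum_RU :: "nat \<Rightarrow> policy \<Rightarrow> int" where
  "cum_RU T p = (\<Sum>t<T. \<Sum>\<tau>=1..t. RU p \<tau>)"

lemma cum_RS_eq_sum_lessThan: "cum_RS T p = (\<Sum>t<T. \<Sum>\<tau>=1..t - 1. RS p \<tau>)"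
  by (simp add: cum_RS_def sum.atLeast1_atMost_eq)

lemma sum_dest_age_horizon:
  assumes "valid_policy K S U p"
  shows "(\<Sum>t=1..T. \<Sum>k=1..K. real (hA p t k)) =
           real_of_int ((\<Sum>t<T. int K * int (Suc t)) - cum_RU T p)"
proof -
  have "(\<Sum>t=1..T. \<Sum>k=1..K. real (hA p t k)) = (\<Sum>t<T. real_of_int (\<Sum>k=1..K. int (snd (st p t) k)))"
    by (simp add: sum.atLeast1_atMost_eq hA_Suc)
  also have "\<dots> = (\<Sum>t<T. real_of_int (int K * int (Suc t) - (\<Sum>\<tau>=1..t. RU p \<tau>)))"
    unfolding sum_dest_age[OF assms] ..
  finally show ?thesis
    by (simp add: cum_RU_def sum_subtractf)
qed

lemma avg_aoi_le_iff:
  assumes "valid_policy K S U p" "valid_policy K S U q" "1 \<le> T" "1 \<le> K"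
  shows "avg_aoi K T p \<le> avg_aoi K T q \<longleftrightarrow> cum_RU T q \<le> cum_RU T p"
proof -
  have "0 < 1 / (real T * real K)"
    using assms(3,4) by simp
  then show ?thesis
    unfolding avg_aoi_def sum_dest_age_horizon[OF assms(1)] sum_dest_age_horizon[OF assms(2)]
    by (simp add: divide_le_cancel)
qed

lemma cum_RU_le_cum_RS:
  assumes "valid_policy K S U p"
  shows "cum_RU T p \<le> cum_RS T p"
  unfolding cum_RU_def cum_RS_eq_sum_lessThan
  by (intro sum_mono sum_RU_le_sum_RS[OF assms])

lemma cum_RU_eq_cum_RS_iff:
  assumes "valid_policy K S U p"
  shows "cum_RU T p = cum_RS T p \<longleftrightarrow>
           (\<forall>t\<in>{1..T - 1}. (\<Sum>\<tau>=1..t - 1. RS p \<tau>) = (\<Sum>\<tau>=1..t. RU p \<tau>))"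
proof -
  define slack where "slack t = (\<Sum>\<tau>=1..t - 1. RS p \<tau>) - (\<Sum>\<tau>=1..t. RU p \<tau>)" for t
  have slack_0: "slack 0 = 0"
    by (simp add: slack_def)
  have "cum_RU T p = cum_RS T p \<longleftrightarrow> (\<Sum>t<T. slack t) = 0"
    unfolding cum_RU_def cum_RS_eq_sum_lessThan slack_def sum_subtractf by linarith
  also have "\<dots> \<longleftrightarrow> (\<forall>t<T. slack t = 0)"
    using sum_RU_le_sum_RS[OF assms] by (subst sum_nonneg_eq_0_iff) (auto simp: slack_def)
  also have "\<dots> \<longleftrightarrow> (\<forall>t\<in>{1..T - 1}. slack t = 0)"
    using slack_0 by (force simp: Suc_le_eq less_diff_conv)
  finally show ?thesis
    by (simp add: slack_def)
qed

section \<open>The greedy policy\<close>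

definition oldest :: "nat \<Rightarrow> nat \<Rightarrow> (nat \<Rightarrow> nat) \<Rightarrow> nat set" where
  "oldest K S g = (SOME A. A \<subseteq> {1..K} \<and> card A = S \<and> (\<forall>i\<in>A. \<forall>j\<in>{1..K} - A. g j \<le> g i))"

lemma oldest:
  assumes "S \<le> K"
  shows oldest_subset: "oldest K S g \<subseteq> {1..K}"
    and card_oldest: "card (oldest K S g) = S"
    and oldest_ge: "\<forall>i\<in>oldest K S g. \<forall>j\<in>{1..K} - oldest K S g. g j \<le> g i"
proof -
  have "\<exists>A. A \<subseteq> {1..K} \<and> card A = S \<and> (\<forall>i\<in>A. \<forall>j\<in>{1..K} - A. g j \<le> g i)"
    using top_subset_exists[of "{1..K}" S g] assms by simp
  from someI_ex[OF this] show "oldest K S g \<subseteq> {1..K}" "card (oldest K S g) = S"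
    "\<forall>i\<in>oldest K S g. \<forall>j\<in>{1..K} - oldest K S g. g j \<le> g i"
    unfolding oldest_def by blast+
qed

text \<open>By fresh_eq_sampled the relay packets of age 1 are exactly those sampled in the previous
  slot, so these are forwarded; the fallback only applies in the first slot, where all K packets
  have age 1.\<close>
definition greedy_policy :: "nat \<Rightarrow> nat \<Rightarrow> policy" where
  "greedy_policy K S g h =
     (oldest K S g,
      if card {k\<in>{1..K}. g k = 1} = S then {k\<in>{1..K}. g k = 1} else oldest K S g)"

lemma greedy_policy_valid:
  assumes "S \<le> K"
  shows "valid_policy K S S (greedy_policy K S)"
  unfolding valid_policy_def greedy_policy_def using oldest[OF assms] by auto

lemma sampled_greedy_Suc:
  "sampled (greedy_policy K S) (Suc n) = oldest K S (fst (st (greedy_policy K S) n))"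
  by (simp add: sampled_Suc greedy_policy_def)

text \<open>After sampling S sensors, at least \<open>#{ages \<ge> m - 1} - S\<close> ages are \<open>\<ge> m\<close>, with equality
  when the S oldest are sampled; so the greedy counts stay pointwise minimal.\<close>
lemma greedy_relay_age_dominated:
  assumes "S \<le> K" "valid_policy K S U p"
  shows "card {k\<in>{1..K}. m \<le> fst (st (greedy_policy K S) n) k} \<le> card {k\<in>{1..K}. m \<le> fst (st p n) k}"
proof (induction n arbitrary: m)
  case 0
  then show ?case by simp
next
  case (Suc n)
  let ?q = "greedy_policy K S"
  have after_sampling: "{k\<in>{1..K}. m \<le> (if k \<in> A then 1 else g k + 1)} = {k\<in>{1..K} - A. m - 1 \<le> g k}"
    if "2 \<le> m" for A and g :: "nat \<Rightarrow> nat"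
    using that by auto
  show ?case
  proof (cases "m \<le> 1")
    case True
    then show ?thesis by (simp add: fst_st_Suc)
  next
    case False
    then have m: "2 \<le> m"
      by simp
    have "card {k\<in>{1..K}. m \<le> fst (st ?q (Suc n)) k} =
          card {k\<in>{1..K} - oldest K S (fst (st ?q n)). m - 1 \<le> fst (st ?q n) k}"
      unfolding fst_st_Suc sampled_greedy_Suc after_sampling[OF m] ..
    also have "\<dots> = card {k\<in>{1..K}. m - 1 \<le> fst (st ?q n) k} - S"
      unfolding card_superlevel_Diff_top_subset[OF finite_atLeastAtMost
          oldest_subset[OF assms(1)] oldest_ge[OF assms(1)]] card_oldest[OF assms(1)] ..
    also have "\<dots> \<le> card {k\<in>{1..K}. m - 1 \<le> fst (st p n) k} - S"
      using Suc.IH by (rule diff_le_mono)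
    also have "\<dots> \<le> card {k\<in>{1..K} - sampled p (Suc n). m - 1 \<le> fst (st p n) k}"
      using card_superlevel_Diff_ge[OF finite_atLeastAtMost sampled_subset[OF assms(2)]]
      unfolding card_sampled[OF assms(2)] .
    also have "\<dots> = card {k\<in>{1..K}. m \<le> fst (st p (Suc n)) k}"
      unfolding fst_st_Suc after_sampling[OF m] ..
    finally show ?thesis .
  qed
qed

lemma greedy_sum_relay_age_le:
  assumes "S \<le> K" "valid_policy K S U p"
  shows "(\<Sum>k=1..K. fst (st (greedy_policy K S) n) k) \<le> (\<Sum>k=1..K. fst (st p n) k)"
proof -
  have "(\<Sum>k=1..K. fst (st (greedy_policy K S) n) k) =
          (\<Sum>m=1..Suc n. card {k\<in>{1..K}. m \<le> fst (st (greedy_policy K S) n) k})"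
    by (rule sum_eq_sum_card_superlevel) (simp_all add: relay_age_le)
  also have "\<dots> \<le> (\<Sum>m=1..Suc n. card {k\<in>{1..K}. m \<le> fst (st p n) k})"
    by (intro sum_mono greedy_relay_age_dominated[OF assms])
  also have "\<dots> = (\<Sum>k=1..K. fst (st p n) k)"
    by (rule sum_eq_sum_card_superlevel[symmetric]) (simp_all add: relay_age_le)
  finally show ?thesis .
qed

lemma cum_RS_le_greedy:
  assumes "S \<le> K" "valid_policy K S U p"
  shows "cum_RS T p \<le> cum_RS T (greedy_policy K S)"
proof -
  have "(\<Sum>\<tau>=1..n. RS p \<tau>) \<le> (\<Sum>\<tau>=1..n. RS (greedy_policy K S) \<tau>)" for n
    using greedy_sum_relay_age_le[OF assms, of n] sum_relay_age[OF assms(2), of n]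
      sum_relay_age[OF greedy_policy_valid[OF assms(1)], of n]
    by (simp flip: of_nat_sum)
  then show ?thesis
    unfolding cum_RS_def by (rule sum_mono)
qed

lemma updated_greedy_Suc_Suc:
  assumes "S \<le> K"
  shows "updated (greedy_policy K S) (Suc (Suc n)) = sampled (greedy_policy K S) (Suc n)"
  using fresh_eq_sampled[OF greedy_policy_valid[OF assms]]
    card_sampled[OF greedy_policy_valid[OF assms]]
  by (simp add: updated_Suc greedy_policy_def)

lemma greedy_dest_age_eq_relay_age:
  assumes "S \<le> K"
  shows "k \<notin> updated (greedy_policy K S) (Suc n) \<Longrightarrow>
           snd (st (greedy_policy K S) n) k = fst (st (greedy_policy K S) n) k"
proof (induction n)
  case (Suc n)
  then have "k \<notin> sampled (greedy_policy K S) (Suc n)"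
    by (simp add: updated_greedy_Suc_Suc[OF assms])
  then show ?case
    using Suc.IH by (auto simp: fst_st_Suc snd_st_Suc)
qed simp

lemma greedy_sum_RU_eq_sum_RS:
  assumes "S \<le> K"
  shows "(\<Sum>\<tau>=1..t. RU (greedy_policy K S) \<tau>) = (\<Sum>\<tau>=1..t - 1. RS (greedy_policy K S) \<tau>)"
proof (cases t)
  case (Suc n)
  let ?q = "greedy_policy K S"
  have valid: "valid_policy K S S ?q"
    by (rule greedy_policy_valid[OF assms])
  have "RU ?q (Suc n) = (\<Sum>k\<in>updated ?q (Suc n). int (snd (st ?q n) k) - int (fst (st ?q n) k))"
    by (simp add: RU_def gA_Suc hA_Suc)
  also have "\<dots> = (\<Sum>k=1..K. int (snd (st ?q n) k) - int (fst (st ?q n) k))"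
    using greedy_dest_age_eq_relay_age[OF assms]
    by (intro sum.mono_neutral_left updated_subset[OF valid]) auto
  finally show ?thesis
    using sum_age_gap[OF valid, of n] Suc by simp
qed simp

lemma greedy_cum_RU_eq_cum_RS:
  assumes "S \<le> K"
  shows "cum_RU T (greedy_policy K S) = cum_RS T (greedy_policy K S)"
  unfolding cum_RU_def cum_RS_eq_sum_lessThan greedy_sum_RU_eq_sum_RS[OF assms] ..

theorem theorem1:
  fixes K S U T :: nat and \<pi>' :: policy
  assumes "K \<ge> 2" and "1 \<le> S" and "S < K" and "1 \<le> U" and "U < K" and "S = U"
    and "T \<ge> 1"
    and "valid_policy K S U \<pi>'"
  shows "(\<forall>\<pi>. valid_policy K S U \<pi> \<longrightarrow> avg_aoi K T \<pi>' \<le> avg_aoi K T \<pi>) \<longleftrightarrow>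
         ((\<forall>\<pi>. valid_policy K S U \<pi> \<longrightarrow> cum_RS T \<pi> \<le> cum_RS T \<pi>') \<and>
          (\<forall>t\<in>{1..T - 1}. (\<Sum>\<tau>=1..t - 1. RS \<pi>' \<tau>) = (\<Sum>\<tau>=1..t. RU \<pi>' \<tau>)))"
proof -
  let ?P = "{p. valid_policy K S U p}"
  have "S \<le> K" "1 \<le> K"
    using assms(1,3) by simp_all
  have "(\<forall>p. valid_policy K S U p \<longrightarrow> avg_aoi K T \<pi>' \<le> avg_aoi K T p) \<longleftrightarrow>
          (\<forall>p\<in>?P. cum_RU T p \<le> cum_RU T \<pi>')"
    using avg_aoi_le_iff[OF assms(8) _ assms(7) \<open>1 \<le> K\<close>] by auto
  also have "\<dots> \<longleftrightarrow> (\<forall>p\<in>?P. cum_RS T p \<le> cum_RS T \<pi>') \<and> cum_RU T \<pi>' = cum_RS T \<pi>'"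
    using greedy_policy_valid[OF \<open>S \<le> K\<close>] greedy_cum_RU_eq_cum_RS[OF \<open>S \<le> K\<close>]
      cum_RS_le_greedy[OF \<open>S \<le> K\<close>] cum_RU_le_cum_RS assms(6,8)
    by (intro max_iff_max_bound_tight) auto
  finally show ?thesis
    using cum_RU_eq_cum_RS_iff[OF assms(8)] by simp
qed

end
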